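(* For all $n\in\mathbb Z$, as operators on $\mathbb C[x_1,x_2,\ldots,y_1,y_2,\ldots]$, $$[X_n,L^+]=-\Big(n+\frac32\Big)X_{n+2}+\Big(2x_2-\frac{\partial}{\partial y_2}\Big)X_n,$$ $$[Y_n,L^+]=\Big(n-\frac32-\kappa_\infty+\sum_i\theta_i\Big)Y_{n-2}-Y_n\frac{\partial}{\partial y_2},$$ $$[X_n,x_2]=-\frac12X_{n+2},\qquad [Y_n,x_2]=-\frac12Y_{n-2},$$ where $x_2$ denotes multiplication by $x_2$ and $[P,Q]=PQ-QP$.
   Context: Let $\kappa_\infty,\theta_1,\dots,\theta_N$ be constants. On the polynomial ring in infinitely many variables $x=(x_1,x_2,\dots)$, $y=(y_1,y_2,\dots)$ define operators $X_n,Y_n$ ($n\in\mathbb Z$) by the generating series $$\sum_{n\in\mathbb Z}X_nk^n=\exp\Big(\sum_{m\ge1}\big(x_m-\tfrac1m\tfrac{\partial}{\partial y_m}\big)k^m\Big)\exp\Big(-\sum_{m\ge1}\tfrac1m\tfrac{\partial}{\partial x_m}k^{-m}\Big),$$ $$\sum_{n\in\mathbb Z}Y_nk^{-n}=\exp\Big(\sum_{m\ge1}\big(y_m-\tfrac1m\tfrac{\partial}{\partial x_m}\big)k^{-m}\Big)\exp\Big(-\sum_{m\ge1}\tfrac1m\tfrac{\partial}{\partial y_m}k^{m}\Big),$$ and $$L^+=\frac{x_1^2}{2}+\sum_{m\ge1}\Big((m+2)x_{m+2}\frac{\partial}{\partial x_m}-my_m\frac{\partial}{\partial y_{m+2}}\Big)-x_1\frac{\partial}{\partial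 y_1}-\Big(-\kappa_\infty+\sum_i\theta_i\Big)\frac{\partial}{\partial y_2}.$$ *)

theory Defs
  imports Complex_Main "HOL-Library.Poly_Mapping"
begin

text \<open>Variables x_m (Xv m) and y_m (Yv m); only indices m >= 1 are used by the ring
  C[x_1,x_2,...,y_1,y_2,...] (see in_R).\<close>
datatype var = Xv nat | Yv nat

fun var_index :: "var \<Rightarrow> nat" where
  "var_index (Xv m) = m" | "var_index (Yv m) = m"

type_synonym poly = "(var \<Rightarrow>\<^sub>0 nat) \<Rightarrow>\<^sub>0 complex"
type_synonym op = "poly \<Rightarrow> poly"

definition in_R :: "poly \<Rightarrow> bool" where
  "in_R p \<longleftrightarrow> (\<forall>\<alpha>\<in>Poly_Mapping.keys p. \<forall>v\<in>Poly_Mapping.keys \<alpha>. var_index v \<ge> 1)"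

definition cpoly :: "complex \<Rightarrow> poly" where
  "cpoly c = Poly_Mapping.single 0 c"

definition vmul :: "var \<Rightarrow> op" where
  "vmul v p = Poly_Mapping.single (Poly_Mapping.single v 1) 1 * p"

definition pd :: "var \<Rightarrow> op" where
  "pd v p = (\<Sum>\<alpha>\<in>Poly_Mapping.keys p. Poly_Mapping.single (\<alpha> - Poly_Mapping.single v 1)
                           (of_nat (Poly_Mapping.lookup \<alpha> v) * Poly_Mapping.lookup p \<alpha>))"

definition fsum :: "(nat \<Rightarrow> poly) \<Rightarrow> poly" where
  "fsum f = (\<Sum>j\<in>{j. f j \<noteq> 0}. f j)"

definition comps :: "nat \<Rightarrow> nat list set" where
  "comps j = {ms. (\<forall>m\<in>set ms. m \<ge> 1) \<and> sum_list ms = j}"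

text \<open>Coefficient of t^j in exp(\<Sum>_{m>=1} A_m t^m) = \<Sum>_r (1/r!) (\<Sum>_m A_m t^m)^r,
  for operator-valued A_m (products being compositions).\<close>
definition expcoeff :: "(nat \<Rightarrow> op) \<Rightarrow> nat \<Rightarrow> op" where
  "expcoeff A j p = (\<Sum>ms\<in>comps j.
      cpoly (1 / of_nat (fact (length ms))) * foldr (\<lambda>m f. A m \<circ> f) ms id p)"

definition Aop :: "nat \<Rightarrow> op" where
  "Aop m p = vmul (Xv m) p - cpoly (1 / of_nat m) * pd (Yv m) p"
definition Bop :: "nat \<Rightarrow> op" where
  "Bop m p = - (cpoly (1 / of_nat m) * pd (Xv m) p)"
definition Cop :: "nat \<Rightarrow> op" where
  "Cop m p = vmul (Yv m) p - cpoly (1 / of_nat m) * pd (Xv m) p"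
definition Dop :: "nat \<Rightarrow> op" where
  "Dop m p = - (cpoly (1 / of_nat m) * pd (Yv m) p)"

text \<open>X_n = coefficient of k^n in exp(\<Sum>A_m k^m) exp(\<Sum>B_m k^{-m}).\<close>
definition Xop :: "int \<Rightarrow> op" where
  "Xop n p = fsum (\<lambda>j. if n + int j \<ge> 0
                        then expcoeff Aop (nat (n + int j)) (expcoeff Bop j p) else 0)"

text \<open>Y_n = coefficient of k^{-n} in exp(\<Sum>C_m k^{-m}) exp(\<Sum>D_m k^m).\<close>
definition Yop :: "int \<Rightarrow> op" where
  "Yop n p = fsum (\<lambda>j. if n + int j \<ge> 0
                        then expcoeff Cop (nat (n + int j)) (expcoeff Dop j p) else 0)"

text \<open>L^+ with constant c = -kappa_inf + \<Sum>_i theta_i.\<close>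
definition Lplus :: "complex \<Rightarrow> op" where
  "Lplus c p = cpoly (1/2) * vmul (Xv 1) (vmul (Xv 1) p)
     + fsum (\<lambda>m. if m \<ge> 1 then
            cpoly (of_nat (m + 2)) * vmul (Xv (m + 2)) (pd (Xv m) p)
          - cpoly (of_nat m) * vmul (Yv m) (pd (Yv (m + 2)) p) else 0)
     - vmul (Xv 1) (pd (Yv 1) p)
     - cpoly c * pd (Yv 2) p"

end

theory Submission
  imports Defs
begin

(* X_n is the coefficient of k^n in E_A(k) E_B(1/k), where E_A(t) = exp(sum_m A_m t^m) with
   A_m = x_m - (1/m) d/dy_m and E_B is built in the same way from B_m = -(1/m) d/dx_m; Y_n is built
   from C_m and D_m. The A_m commute with each other and have a scalar commutator with each x_k,
   y_k, d/dx_k, d/dy_k, nonzero only for m = k. So commuting such a generator through the i-th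
   coefficient E_i of E_A only produces the shifted coefficient E_(i-k). The quadratic terms of L^+
   produce sums sum_m m A_m E_(i-m), which collapse by the Euler identity
   i E_i = sum_m m A_m E_(i-m). What remains of the commutator of E_A(n+j) E_B(j) with L^+ or x_2
   is a combination of such products plus differences f(j+d) - f(j), and these cancel when summed
   over all j in Z. *)

section \<open>Polynomials and the canonical commutation relations\<close>

lemma lookup_vmul:
  "Poly_Mapping.lookup (vmul w p) \<beta> =
    (if Poly_Mapping.lookup \<beta> w \<ge> 1 then Poly_Mapping.lookup p (\<beta> - Poly_Mapping.single w 1)
        else 0)"
proof -
  have split_off: "\<beta> = Poly_Mapping.single w 1 + \<gamma> \<longleftrightarrow>
          Poly_Mapping.lookup \<beta> w \<ge> 1 \<and> \<gamma> = \<beta> - Poly_Mapping.single w 1" for \<gamma>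
    by (auto simp: poly_mapping_eq_iff fun_eq_iff lookup_add lookup_minus lookup_single when_def)
  have "Poly_Mapping.lookup (vmul w p) \<beta> =
      (\<Sum>\<gamma>. Poly_Mapping.lookup p \<gamma> when \<beta> = Poly_Mapping.single w 1 + \<gamma>)"
    by (simp add: vmul_def lookup_mult lookup_single when_mult)
  then show ?thesis
    unfolding split_off by (cases "Poly_Mapping.lookup \<beta> w \<ge> 1") simp_all
qed

lemma lookup_cpoly_mult: "Poly_Mapping.lookup (cpoly c * p) \<beta> = c * Poly_Mapping.lookup p \<beta>"
  unfolding cpoly_def mult_map_scale_conv_mult[symmetric] by (simp add: map.rep_eq when_def)

lemma lookup_pd:
  "Poly_Mapping.lookup (pd v p) \<beta> =
    of_nat (Poly_Mapping.lookup \<beta> v + 1) * Poly_Mapping.lookup p (\<beta> + Poly_Mapping.single v 1)"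
proof -
  have "\<alpha> - Poly_Mapping.single v 1 = \<beta> \<longleftrightarrow> \<alpha> = \<beta> + Poly_Mapping.single v 1"
    if "Poly_Mapping.lookup \<alpha> v \<noteq> 0" for \<alpha>
    using that
    by (auto simp: poly_mapping_eq_iff fun_eq_iff lookup_add lookup_minus lookup_single when_def)
  then have "Poly_Mapping.lookup (pd v p) \<beta> =
      (\<Sum>\<alpha>\<in>Poly_Mapping.keys p. if \<alpha> = \<beta> + Poly_Mapping.single v 1
                               then of_nat (Poly_Mapping.lookup \<alpha> v)
                                   * Poly_Mapping.lookup p \<alpha> else 0)"
    unfolding pd_def lookup_sum lookup_single
    by (intro sum.cong) (auto simp: when_def lookup_add)
  then show ?thesis
    by (simp add: lookup_add in_keys_iff)
qed

lemma cpoly_add: "cpoly (a + b) = cpoly a + cpoly b"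
  by (simp add: cpoly_def single_add)
lemma cpoly_diff: "cpoly (a - b) = cpoly a - cpoly b"
  by (simp add: cpoly_def single_diff)
lemma cpoly_uminus: "cpoly (- a) = - cpoly a"
  by (simp add: cpoly_def single_uminus)
lemma cpoly_mult: "cpoly (a * b) = cpoly a * cpoly b"
  by (simp add: cpoly_def mult_single)
lemma cpoly_zero: "cpoly 0 = 0"
  by (simp add: cpoly_def)
lemma cpoly_one: "cpoly 1 = 1"
  by (simp add: cpoly_def)
lemma cpoly_of_nat: "cpoly (of_nat n) = of_nat n"
  by (simp add: cpoly_def)
lemma cpoly_of_int: "cpoly (of_int n) = of_int n"
  by (simp add: cpoly_def)
lemma cpoly_numeral: "cpoly (numeral n) = numeral n"
  by (simp add: cpoly_def)
lemma cpoly_sum: "cpoly (sum f S) = (\<Sum>x\<in>S. cpoly (f x))"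
  by (induction S rule: infinite_finite_induct) (simp_all add: cpoly_zero cpoly_add)

lemmas cpoly_hom = cpoly_add cpoly_diff cpoly_uminus cpoly_mult cpoly_zero cpoly_one
  cpoly_of_nat cpoly_of_int cpoly_numeral

lemma cpoly_mult_mult: "cpoly a * (cpoly b * p) = cpoly (a * b) * p"
  by (simp add: cpoly_mult mult.assoc)

lemma vmul_add: "vmul v (p + q) = vmul v p + vmul v q"
  by (simp add: vmul_def algebra_simps)
lemma vmul_diff: "vmul v (p - q) = vmul v p - vmul v q"
  by (simp add: vmul_def algebra_simps)
lemma vmul_uminus: "vmul v (- p) = - vmul v p"
  by (simp add: vmul_def)
lemma vmul_cpoly: "vmul v (cpoly c * p) = cpoly c * vmul v p"
  by (simp add: vmul_def algebra_simps)
lemma vmul_commute: "vmul v (vmul w p) = vmul w (vmul v p)"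
  by (simp add: vmul_def algebra_simps)

lemma pd_add: "pd v (p + q) = pd v p + pd v q"
  by (simp add: poly_mapping_eq_iff fun_eq_iff lookup_pd lookup_add algebra_simps)
lemma pd_diff: "pd v (p - q) = pd v p - pd v q"
  by (simp add: poly_mapping_eq_iff fun_eq_iff lookup_pd lookup_minus algebra_simps)
lemma pd_uminus: "pd v (- p) = - pd v p"
  by (simp add: poly_mapping_eq_iff fun_eq_iff lookup_pd)
lemma pd_cpoly: "pd v (cpoly c * p) = cpoly c * pd v p"
  by (simp add: poly_mapping_eq_iff fun_eq_iff lookup_pd lookup_cpoly_mult)
lemma pd_commute: "pd v (pd w p) = pd w (pd v p)"
  by (simp add: poly_mapping_eq_iff fun_eq_iff lookup_pd lookup_add lookup_single when_def
      algebra_simps)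

lemma pd_vmul: "pd v (vmul w p) = vmul w (pd v p) + (if v = w then p else 0)"
proof (rule poly_mapping_eqI)
  fix \<beta>
  let ?e = "\<lambda>u. Poly_Mapping.single u (1::nat)"
  have "\<beta> + ?e v - ?e w = \<beta> - ?e w + ?e v" if "v \<noteq> w"
    using that
    by (auto simp: poly_mapping_eq_iff fun_eq_iff lookup_add lookup_minus lookup_single when_def)
  moreover have "\<beta> - ?e w + ?e w = \<beta>" if "Poly_Mapping.lookup \<beta> w \<ge> 1"
    using that
    by (auto simp: poly_mapping_eq_iff fun_eq_iff lookup_add lookup_minus lookup_single when_def)
  ultimately show "Poly_Mapping.lookup (pd v (vmul w p)) \<beta>
      = Poly_Mapping.lookup (vmul w (pd v p) + (if v = w then p else 0)) \<beta>"
    by (auto simp: lookup_pd lookup_vmul lookup_add lookup_minus lookup_single when_def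
        algebra_simps)
qed

definition linear_op :: "op \<Rightarrow> bool" where
  "linear_op f \<longleftrightarrow> (\<forall>p q. f (p + q) = f p + f q) \<and> (\<forall>c p. f (cpoly c * p) = cpoly c * f p)"

lemma linear_op_add: "linear_op f \<Longrightarrow> f (p + q) = f p + f q"
  by (simp add: linear_op_def)
lemma linear_op_cpoly: "linear_op f \<Longrightarrow> f (cpoly c * p) = cpoly c * f p"
  by (simp add: linear_op_def)
lemma linear_op_cpoly_right: "linear_op f \<Longrightarrow> f (p * cpoly c) = f p * cpoly c"
  by (simp add: linear_op_def mult.commute)
lemma linear_op_zero: "linear_op f \<Longrightarrow> f 0 = 0"
  using linear_op_cpoly[of f 0 0] by (simp add: cpoly_zero)
lemma linear_op_uminus: "linear_op f \<Longrightarrow> f (- p) = - f p"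
  using linear_op_cpoly[of f "-1" p] by (simp add: cpoly_uminus cpoly_one)
lemma linear_op_diff: "linear_op f \<Longrightarrow> f (p - q) = f p - f q"
  using linear_op_add[of f p "- q"] by (simp add: linear_op_uminus)
lemma linear_op_sum: "linear_op f \<Longrightarrow> f (sum g S) = (\<Sum>x\<in>S. f (g x))"
  by (induction S rule: infinite_finite_induct) (simp_all add: linear_op_zero linear_op_add)

lemmas linear_op_simps =
  linear_op_add linear_op_diff linear_op_uminus linear_op_zero linear_op_cpoly linear_op_cpoly_right

lemma linear_op_comp: "linear_op f \<Longrightarrow> linear_op g \<Longrightarrow> linear_op (\<lambda>p. f (g p))"
  by (simp add: linear_op_def)
lemma linear_op_vmul: "linear_op (vmul v)"
  by (simp add: linear_op_def vmul_add vmul_cpoly)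
lemma linear_op_pd: "linear_op (pd v)"
  by (simp add: linear_op_def pd_add pd_cpoly)

section \<open>Coefficients of operator exponentials\<close>

definition comp_ops :: "(nat \<Rightarrow> op) \<Rightarrow> nat list \<Rightarrow> op" where
  "comp_ops A ms = foldr (\<lambda>m f. A m \<circ> f) ms id"

lemma comp_ops_Nil [simp]: "comp_ops A [] p = p"
  by (simp add: comp_ops_def)
lemma comp_ops_Cons [simp]: "comp_ops A (m # ms) p = A m (comp_ops A ms p)"
  by (simp add: comp_ops_def)

lemma linear_op_comp_ops: "(\<And>m. linear_op (A m)) \<Longrightarrow> linear_op (comp_ops A ms)"
  by (induction ms) (simp_all add: linear_op_def)

lemma expcoeff_eq_sum_comp_ops:
  "expcoeff A j p = (\<Sum>ms\<in>comps j. cpoly (1 / of_nat (fact (length ms))) * comp_ops A ms p)"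
  by (simp add: expcoeff_def comp_ops_def)

lemma linear_op_expcoeff:
  assumes "\<And>m. linear_op (A m)"
  shows "linear_op (expcoeff A j)"
proof -
  have "linear_op (\<lambda>p. cpoly c * comp_ops A ms p)" for c ms
    using linear_op_comp_ops[where ms = ms, OF assms]
    by (simp add: linear_op_def distrib_left mult.left_commute)
  then show ?thesis
    by (simp add: linear_op_def expcoeff_eq_sum_comp_ops sum.distrib sum_distrib_left)
qed

definition remove_nth :: "nat \<Rightarrow> 'a list \<Rightarrow> 'a list" where
  "remove_nth i xs = take i xs @ drop (Suc i) xs"

definition insert_nth :: "nat \<Rightarrow> 'a \<Rightarrow> 'a list \<Rightarrow> 'a list" where
  "insert_nth i x xs = take i xs @ x # drop i xs"

lemma remove_nth_Cons_0 [simp]: "remove_nth 0 (x # xs) = xs"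
  by (simp add: remove_nth_def)
lemma remove_nth_Cons_Suc [simp]: "remove_nth (Suc i) (x # xs) = x # remove_nth i xs"
  by (simp add: remove_nth_def)
lemma length_remove_nth: "i < length xs \<Longrightarrow> length (remove_nth i xs) = length xs - 1"
  by (simp add: remove_nth_def)
lemma Suc_length_remove_nth: "i < length xs \<Longrightarrow> Suc (length (remove_nth i xs)) = length xs"
  by (simp add: remove_nth_def)
lemma set_remove_nth: "set (remove_nth i xs) \<subseteq> set xs"
  by (auto simp: remove_nth_def dest: in_set_takeD in_set_dropD)

lemma sum_list_remove_nth:
  assumes "i < length xs"
  shows "sum_list (remove_nth i xs) + xs ! i = sum_list (xs :: 'a::comm_monoid_add list)"
proof -
  have "sum_list xs = sum_list (take i xs @ xs ! i # drop (Suc i) xs)"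
    using assms by (simp flip: id_take_nth_drop)
  then show ?thesis
    by (simp add: remove_nth_def add_ac)
qed

lemma length_insert_nth: "length (insert_nth i x xs) = Suc (length xs)"
  by (simp add: insert_nth_def)
lemma insert_nth_remove_nth: "i < length xs \<Longrightarrow> insert_nth i (xs ! i) (remove_nth i xs) = xs"
  by (simp add: insert_nth_def remove_nth_def id_take_nth_drop[symmetric])
lemma remove_nth_insert_nth: "i \<le> length xs \<Longrightarrow> remove_nth i (insert_nth i x xs) = xs"
  by (simp add: insert_nth_def remove_nth_def)
lemma nth_insert_nth: "i \<le> length xs \<Longrightarrow> insert_nth i x xs ! i = x"
  by (simp add: insert_nth_def nth_append)
lemma set_insert_nth: "set (insert_nth i x xs) \<subseteq> insert x (set xs)"
  by (auto simp: insert_nth_def dest: in_set_takeD in_set_dropD)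

lemma sum_list_insert_nth:
  "sum_list (insert_nth i x xs) = x + sum_list (xs :: 'a::comm_monoid_add list)"
proof -
  have "sum_list xs = sum_list (take i xs) + sum_list (drop i xs)"
    by (metis append_take_drop_id sum_list_append)
  then show ?thesis
    by (simp add: insert_nth_def add_ac)
qed

lemma finite_comps: "finite (comps j)"
proof (rule finite_subset)
  have "length ms \<le> sum_list ms" if "\<forall>m\<in>set ms. m \<ge> 1" for ms :: "nat list"
    using that by (induction ms) auto
  then show "comps j \<subseteq> {ms. set ms \<subseteq> {..j} \<and> length ms \<le> j}"
    unfolding comps_def using member_le_sum_list by fastforce
  show "finite {ms. set ms \<subseteq> {..j} \<and> length ms \<le> j}"
    by (rule finite_lists_length_le) simp
qed

lemma remove_nth_in_comps:
  assumes "ms \<in> comps j" and "i < length ms"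
  shows "0 < ms ! i" and "ms ! i \<le> j" and "remove_nth i ms \<in> comps (j - ms ! i)"
proof -
  have "ms ! i \<in> set ms"
    using assms(2) by (rule nth_mem)
  then show "0 < ms ! i" and "ms ! i \<le> j"
    using assms(1) member_le_sum_list[of "ms ! i" ms] by (auto simp: comps_def)
  show "remove_nth i ms \<in> comps (j - ms ! i)"
    using assms(1) sum_list_remove_nth[OF assms(2)] set_remove_nth[of i ms]
    by (auto simp: comps_def)
qed

lemma insert_nth_in_comps:
  assumes "m \<in> {1..j}" and "ms \<in> comps (j - m)"
  shows "insert_nth i m ms \<in> comps j"
  using assms set_insert_nth[of i m ms] by (auto simp: comps_def sum_list_insert_nth)

lemma sum_comps_remove_nth:
  "(\<Sum>ms\<in>comps j. \<Sum>i<length ms. g (ms ! i) (remove_nth i ms))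
     = (\<Sum>m\<in>{1..j}. \<Sum>ms\<in>comps (j - m). \<Sum>i\<le>length ms. g m ms)"
proof -
  have "(\<Sum>ms\<in>comps j. \<Sum>i<length ms. g (ms ! i) (remove_nth i ms))
      = (\<Sum>(ms, i)\<in>Sigma (comps j) (\<lambda>ms. {..<length ms}). g (ms ! i) (remove_nth i ms))"
    by (simp add: sum.Sigma finite_comps)
  also have "\<dots>
      = (\<Sum>(m, ms, i)\<in>Sigma {1..j} (\<lambda>m. Sigma (comps (j - m)) (\<lambda>ms. {..length ms})). g m ms)"
    by (rule sum.reindex_bij_witness[where i = "\<lambda>(m, ms, i). (insert_nth i m ms, i)"
          and j = "\<lambda>(ms, i). (ms ! i, remove_nth i ms, i)"])
      (auto simp: Suc_le_eq remove_nth_in_comps insert_nth_in_comps length_remove_nth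
          length_insert_nth
         insert_nth_remove_nth remove_nth_insert_nth nth_insert_nth)
  also have "\<dots> = (\<Sum>m\<in>{1..j}. \<Sum>ms\<in>comps (j - m). \<Sum>i\<le>length ms. g m ms)"
    by (simp add: sum.Sigma finite_comps)
  finally show ?thesis .
qed

(* A composition with r parts has r parts to remove, and r / r! = 1 / (r - 1)!. *)
lemma sum_comps_remove_nth_fact:
  "(\<Sum>ms\<in>comps j. cpoly (1 / of_nat (fact (length ms)))
      * (\<Sum>i<length ms. h (ms ! i) (remove_nth i ms)))
     = (\<Sum>m\<in>{1..j}. \<Sum>ms\<in>comps (j - m). cpoly (1 / of_nat (fact (length ms))) * h m ms)"
proof -
  define w where "w r = cpoly (1 / of_nat (fact r))" for r
  have w_Suc: "of_nat (Suc r) * w (Suc r) = w r" for r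
  proof -
    have "(of_nat (Suc r) :: complex) * (1 / of_nat (fact (Suc r))) = 1 / of_nat (fact r)"
      unfolding fact_Suc of_nat_mult by (simp del: of_nat_Suc)
    then show ?thesis
      by (simp add: w_def flip: cpoly_of_nat cpoly_mult)
  qed
  have "(\<Sum>ms\<in>comps j. w (length ms) * (\<Sum>i<length ms. h (ms ! i) (remove_nth i ms)))
      = (\<Sum>ms\<in>comps j. \<Sum>i<length ms. w (Suc (length (remove_nth i ms)))
          * h (ms ! i) (remove_nth i ms))"
    by (auto simp: sum_distrib_left Suc_length_remove_nth intro!: sum.cong)
  also have "\<dots> = (\<Sum>m\<in>{1..j}. \<Sum>ms\<in>comps (j - m). \<Sum>i\<le>length ms. w (Suc (length ms)) * h m ms)"
    by (rule sum_comps_remove_nth)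
  also have "\<dots> = (\<Sum>m\<in>{1..j}. \<Sum>ms\<in>comps (j - m). w (length ms) * h m ms)"
    by (simp only: sum_constant card_atMost mult.assoc[symmetric] w_Suc)
  finally show ?thesis
    unfolding w_def .
qed

lemma comp_ops_commutator:
  assumes linA: "\<And>m. linear_op (A m)"
    and rel: "\<And>m q. A m (Z q) = Z (A m q) + cpoly (c m) * q"
  shows "comp_ops A ms (Z q) = Z (comp_ops A ms q)
           + (\<Sum>i<length ms. cpoly (c (ms ! i)) * comp_ops A (remove_nth i ms) q)"
proof (induction ms)
  case Nil
  then show ?case by simp
next
  case (Cons m ms)
  have "comp_ops A (m # ms) (Z q)
      = A m (Z (comp_ops A ms q)
          + (\<Sum>i<length ms. cpoly (c (ms ! i)) * comp_ops A (remove_nth i ms) q))"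
    using Cons by simp
  also have "\<dots> = Z (A m (comp_ops A ms q)) + cpoly (c m) * comp_ops A ms q
       + (\<Sum>i<length ms. cpoly (c (ms ! i)) * A m (comp_ops A (remove_nth i ms) q))"
    by (simp only: linear_op_add[OF linA] linear_op_sum[OF linA] linear_op_cpoly[OF linA] rel)
  also have "\<dots> = Z (comp_ops A (m # ms) q)
       + (\<Sum>i<length (m # ms). cpoly (c ((m # ms) ! i)) * comp_ops A (remove_nth i (m # ms)) q)"
    by (simp only: length_Cons sum.lessThan_Suc_shift) (simp add: algebra_simps)
  finally show ?case .
qed

lemma expcoeff_commutator:
  assumes linA: "\<And>m. linear_op (A m)" and linZ: "linear_op Z"
    and rel: "\<And>m q. A m (Z q) = Z (A m q) + cpoly (c m) * q"
  shows "expcoeff A j (Z q) = Z (expcoeff A j q) + (\<Sum>m\<in>{1..j}. cpoly (c m) * expcoeff A (j - m) q)"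
proof -
  have "expcoeff A j (Z q) - Z (expcoeff A j q)
      = (\<Sum>ms\<in>comps j. cpoly (1 / of_nat (fact (length ms)))
           * (\<Sum>i<length ms. cpoly (c (ms ! i)) * comp_ops A (remove_nth i ms) q))"
    by (simp add: expcoeff_eq_sum_comp_ops comp_ops_commutator[OF linA rel] linear_op_sum[OF linZ]
        linear_op_cpoly[OF linZ] distrib_left sum.distrib)
  also have "\<dots> = (\<Sum>m\<in>{1..j}. \<Sum>ms\<in>comps (j - m).
                    cpoly (1 / of_nat (fact (length ms))) * (cpoly (c m) * comp_ops A ms q))"
    by (rule sum_comps_remove_nth_fact)
  also have "\<dots> = (\<Sum>m\<in>{1..j}. cpoly (c m) * expcoeff A (j - m) q)"
    by (simp add: expcoeff_eq_sum_comp_ops sum_distrib_left mult.left_commute)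
  finally show ?thesis
    by (simp add: algebra_simps)
qed

lemma comp_ops_nth:
  assumes comm: "\<And>a b q. A a (A b q) = A b (A a q)" and "i < length ms"
  shows "comp_ops A ms q = A (ms ! i) (comp_ops A (remove_nth i ms) q)"
  using assms(2)
proof (induction ms arbitrary: i)
  case Nil
  then show ?case by simp
next
  case (Cons m ms)
  then show ?case
    by (cases i) (simp_all add: comm)
qed

(* Coefficients of t d/dt exp(S(t)) = t S'(t) exp(S(t)); this needs the A_m to commute. *)
lemma expcoeff_euler:
  assumes linA: "\<And>m. linear_op (A m)" and comm: "\<And>a b q. A a (A b q) = A b (A a q)"
  shows "cpoly (of_nat j) * expcoeff A j q
      = (\<Sum>m\<in>{1..j}. cpoly (of_nat m) * A m (expcoeff A (j - m) q))"
proof -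
  have split_j: "cpoly (of_nat j) * comp_ops A ms q
      = (\<Sum>i<length ms. cpoly (of_nat (ms ! i)) * A (ms ! i) (comp_ops A (remove_nth i ms) q))"
    if "ms \<in> comps j" for ms
  proof -
    have "j = (\<Sum>i<length ms. ms ! i)"
      using that by (simp add: comps_def sum_list_sum_nth atLeast0LessThan)
    then show ?thesis
      by (simp add: cpoly_sum sum_distrib_right comp_ops_nth[where A = A, OF comm])
  qed
  have "cpoly (of_nat j) * expcoeff A j q
      = (\<Sum>ms\<in>comps j. cpoly (1 / of_nat (fact (length ms)))
           * (\<Sum>i<length ms. cpoly (of_nat (ms ! i)) * A (ms ! i) (comp_ops A (remove_nth i ms) q)))"
    unfolding expcoeff_eq_sum_comp_ops sum_distrib_left
    by (intro sum.cong refl) (subst mult.left_commute, simp only: split_j sum_distrib_left)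
  also have "\<dots> = (\<Sum>m\<in>{1..j}. \<Sum>ms\<in>comps (j - m).
                    cpoly (1 / of_nat (fact (length ms)))
                        * (cpoly (of_nat m) * A m (comp_ops A ms q)))"
    by (rule sum_comps_remove_nth_fact)
  also have "\<dots> = (\<Sum>m\<in>{1..j}. cpoly (of_nat m) * A m (expcoeff A (j - m) q))"
    by (simp add: expcoeff_eq_sum_comp_ops sum_distrib_left mult.left_commute
        linear_op_sum[OF linA] linear_op_cpoly[OF linA])
  finally show ?thesis .
qed

definition weight :: "(var \<Rightarrow> nat) \<Rightarrow> (var \<Rightarrow>\<^sub>0 nat) \<Rightarrow> nat" where
  "weight f \<alpha> = (\<Sum>v. f v * Poly_Mapping.lookup \<alpha> v)"

lemma weight_add_single: "weight f (\<beta> + Poly_Mapping.single v 1) = weight f \<beta> + f v"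
proof -
  have "finite {u. f u * Poly_Mapping.lookup \<beta> u \<noteq> 0}"
    by (rule finite_subset[of _ "Poly_Mapping.keys \<beta>"]) (auto simp: in_keys_iff)
  moreover have "finite {u. f u * Poly_Mapping.lookup (Poly_Mapping.single v 1) u \<noteq> 0}"
    by (rule finite_subset[of _ "{v}"]) (auto simp: lookup_single when_def)
  ultimately show ?thesis
    by (simp add: weight_def lookup_add distrib_left Sum_any.distrib lookup_single mult_when)
qed

definition lowers_weight :: "(var \<Rightarrow> nat) \<Rightarrow> (nat \<Rightarrow> op) \<Rightarrow> bool" where
  "lowers_weight f A \<longleftrightarrow> (\<forall>m p \<beta>. \<beta> \<in> Poly_Mapping.keys (A m p) \<longrightarrow>
                           (\<exists>\<alpha>\<in>Poly_Mapping.keys p. weight f \<alpha> = weight f \<beta> + m))"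

lemma keys_comp_ops_weight:
  assumes "lowers_weight f A" and "\<beta> \<in> Poly_Mapping.keys (comp_ops A ms p)"
  shows "\<exists>\<alpha>\<in>Poly_Mapping.keys p. weight f \<alpha> = weight f \<beta> + sum_list ms"
  using assms(2)
proof (induction ms arbitrary: \<beta>)
  case Nil
  then show ?case by auto
next
  case (Cons m ms)
  then have "\<beta> \<in> Poly_Mapping.keys (A m (comp_ops A ms p))"
    by simp
  then obtain \<gamma> where "\<gamma> \<in> Poly_Mapping.keys (comp_ops A ms p)" and \<gamma>: "weight f \<gamma> = weight f \<beta> + m"
    using assms(1) unfolding lowers_weight_def by blast
  then obtain \<alpha> where "\<alpha> \<in> Poly_Mapping.keys p" and "weight f \<alpha> = weight f \<gamma> + sum_list ms"
    using Cons.IH by blast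
  with \<gamma> show ?case
    by (intro bexI[of _ \<alpha>]) simp_all
qed

lemma expcoeff_eq_0_above_weight:
  assumes "lowers_weight f A" and "\<forall>\<alpha>\<in>Poly_Mapping.keys p. weight f \<alpha> < j"
  shows "expcoeff A j p = 0"
proof -
  have "Poly_Mapping.keys (comp_ops A ms p) = {}" if "ms \<in> comps j" for ms
    using keys_comp_ops_weight[OF assms(1)] assms(2) that by (fastforce simp: comps_def)
  then show ?thesis
    by (simp add: expcoeff_eq_sum_comp_ops)
qed

definition ecoeff :: "(nat \<Rightarrow> op) \<Rightarrow> int \<Rightarrow> op" where
  "ecoeff A i q = (if 0 \<le> i then expcoeff A (nat i) q else 0)"

lemma ecoeff_neg: "i < 0 \<Longrightarrow> ecoeff A i q = 0"
  by (simp add: ecoeff_def)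

lemma linear_op_ecoeff: "(\<And>m. linear_op (A m)) \<Longrightarrow> linear_op (ecoeff A i)"
  using linear_op_expcoeff[of A "nat i"] by (simp add: linear_op_def ecoeff_def)

lemma finite_support_ecoeff:
  assumes lowers: "lowers_weight f A"
  shows "finite {i. ecoeff A i p \<noteq> 0}"
proof -
  define K where "K = Suc (\<Sum>\<alpha>\<in>Poly_Mapping.keys p. weight f \<alpha>)"
  have below_K: "weight f \<alpha> < K" if "\<alpha> \<in> Poly_Mapping.keys p" for \<alpha>
    using member_le_sum[OF that, of "weight f"] by (simp add: K_def)
  have "ecoeff A i p = 0" if "i \<notin> {0..<int K}" for i
  proof (cases "i < 0")
    case False
    with that have "K \<le> nat i"
      by simp
    then have "\<forall>\<alpha>\<in>Poly_Mapping.keys p. weight f \<alpha> < nat i"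
      using below_K by (blast intro: less_le_trans)
    then show ?thesis
      by (simp add: ecoeff_def expcoeff_eq_0_above_weight[OF lowers])
  qed (simp add: ecoeff_neg)
  then have "{i. ecoeff A i p \<noteq> 0} \<subseteq> {0..<int K}"
    by blast
  then show ?thesis
    by (rule finite_subset) simp
qed

lemma ecoeff_commutator:
  assumes linA: "\<And>m. linear_op (A m)" and linZ: "linear_op Z" and "1 \<le> k"
    and rel: "\<And>m q. A m (Z q) = Z (A m q) + (if m = k then cpoly \<kappa> * q else 0)"
  shows "ecoeff A i (Z q) = Z (ecoeff A i q) + cpoly \<kappa> * ecoeff A (i - int k) q"
proof (cases "i < 0")
  case True
  then show ?thesis by (simp add: ecoeff_neg linear_op_zero[OF linZ])
next
  case False
  then obtain j where i: "i = int j"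
    by (metis nonneg_int_cases not_less)
  define c where "c m = (if m = k then \<kappa> else 0)" for m
  have "A m (Z q) = Z (A m q) + cpoly (c m) * q" for m q
    by (simp add: rel c_def cpoly_zero)
  then have "ecoeff A i (Z q) = Z (ecoeff A i q) + (\<Sum>m\<in>{1..j}. cpoly (c m) * expcoeff A (j - m) q)"
    by (simp add: i ecoeff_def expcoeff_commutator[OF linA linZ])
  also have "(\<Sum>m\<in>{1..j}. cpoly (c m) * expcoeff A (j - m) q)
      = (\<Sum>m\<in>{1..j}. if m = k then cpoly \<kappa> * expcoeff A (j - m) q else 0)"
    by (intro sum.cong) (simp_all add: c_def cpoly_zero)
  also have "\<dots> = cpoly \<kappa> * ecoeff A (i - int k) q"
    using \<open>1 \<le> k\<close> by (simp add: i ecoeff_def nat_diff_distrib)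
  finally show ?thesis .
qed

lemma ecoeff_commute:
  assumes linA: "\<And>m. linear_op (A m)" and linZ: "linear_op Z"
    and rel: "\<And>m q. A m (Z q) = Z (A m q)"
  shows "ecoeff A i (Z q) = Z (ecoeff A i q)"
  using ecoeff_commutator[where \<kappa> = 0 and i = i and q = q, OF linA linZ order_refl] rel
  by (simp add: cpoly_zero)

lemma ecoeff_euler:
  assumes linA: "\<And>m. linear_op (A m)" and comm: "\<And>a b q. A a (A b q) = A b (A a q)"
    and "nat i \<le> K"
  shows "cpoly (of_int i) * ecoeff A i q
      = (\<Sum>m\<in>{1..K}. cpoly (of_nat m) * A m (ecoeff A (i - int m) q))"
proof (cases "i < 0")
  case True
  then show ?thesis by (simp add: ecoeff_neg linear_op_zero[OF linA])
next
  case False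
  then obtain j where i: "i = int j"
    by (metis nonneg_int_cases not_less)
  have "cpoly (of_int i) * ecoeff A i q
      = (\<Sum>m\<in>{1..j}. cpoly (of_nat m) * A m (ecoeff A (i - int m) q))"
    by (auto simp: i ecoeff_def expcoeff_euler[OF linA comm] nat_diff_distrib intro!: sum.cong)
  also have "\<dots> = (\<Sum>m\<in>{1..K}. cpoly (of_nat m) * A m (ecoeff A (i - int m) q))"
    using \<open>nat i \<le> K\<close> by (intro sum.mono_neutral_left)
        (auto simp: i ecoeff_neg linear_op_zero[OF linA])
  finally show ?thesis .
qed

section \<open>Finitely supported sums\<close>

lemma fsum_eq_Sum_any: "fsum f = Sum_any f"
  by (simp add: fsum_def Sum_any.expand_set)

lemma Sum_any_uminus: "Sum_any (\<lambda>j. - f j) = - Sum_any (f :: 'i \<Rightarrow> 'a::ab_group_add)"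
  by (simp add: Sum_any.expand_set sum_negf)

lemma Sum_any_diff:
  fixes f g :: "'i \<Rightarrow> 'a::ab_group_add"
  assumes "finite {j. f j \<noteq> 0}" and "finite {j. g j \<noteq> 0}"
  shows "Sum_any (\<lambda>j. f j - g j) = Sum_any f - Sum_any g"
  using Sum_any.distrib[of f "\<lambda>j. - g j"] assms
  by (simp add: Sum_any.expand_set sum_negf)

lemma linear_op_Sum_any:
  assumes "linear_op \<Phi>" and "finite {j. f j \<noteq> 0}"
  shows "\<Phi> (Sum_any f) = Sum_any (\<lambda>j. \<Phi> (f j))"
proof -
  have "{j. \<Phi> (f j) \<noteq> 0} \<subseteq> {j. f j \<noteq> 0}"
    using linear_op_zero[OF assms(1)] by auto
  then show ?thesis
    using assms by (simp add: Sum_any.expand_superset[of "{j. f j \<noteq> 0}"] linear_op_sum)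
qed

lemma Sum_any_shift: "Sum_any (\<lambda>j. f (j + d)) = Sum_any (f :: int \<Rightarrow> 'a::comm_monoid_add)"
  by (rule Sum_any.reindex_cong[OF bij_plus_right, symmetric]) (simp add: comp_def)

lemma Sum_any_int_eq_Sum_any_nat:
  fixes g :: "int \<Rightarrow> 'a::comm_monoid_add"
  assumes "finite {j. g j \<noteq> 0}" and "\<And>j. j < 0 \<Longrightarrow> g j = 0"
  shows "Sum_any (\<lambda>j. g (int j)) = Sum_any g"
proof -
  let ?S = "{j. g j \<noteq> 0}"
  have S: "?S = int ` nat ` ?S"
    using assms(2) by (force simp: image_image intro: image_eqI[where x = "nat _"])
  have "Sum_any (\<lambda>j. g (int j)) = sum (\<lambda>j. g (int j)) (nat ` ?S)"
    by (rule Sum_any.expand_superset) (use assms(1) in \<open>auto intro: image_eqI[where x = "int _"]\<close>)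
  also have "\<dots> = sum g (int ` nat ` ?S)"
    by (simp add: sum.reindex)
  also have "\<dots> = Sum_any g"
    by (simp flip: S add: Sum_any.expand_set)
  finally show ?thesis .
qed

lemma finite_support_add:
  "finite {j. f j \<noteq> 0} \<Longrightarrow> finite {j. g j \<noteq> 0} \<Longrightarrow> finite {j. f j + g j \<noteq> (0::'a::monoid_add)}"
  by (rule finite_subset[of _ "{j. f j \<noteq> 0} \<union> {j. g j \<noteq> 0}"]) auto

lemma finite_support_diff:
  "finite {j. f j \<noteq> 0} \<Longrightarrow> finite {j. g j \<noteq> 0} \<Longrightarrow> finite {j. f j - g j \<noteq> (0::'a::group_add)}"
  by (rule finite_subset[of _ "{j. f j \<noteq> 0} \<union> {j. g j \<noteq> 0}"]) auto

lemma finite_support_comp_shift: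
  fixes g :: "int \<Rightarrow> 'a::zero" and H :: "int \<Rightarrow> 'a \<Rightarrow> 'b::zero"
  assumes "finite {i. g i \<noteq> 0}" and "\<And>j. H j 0 = 0"
  shows "finite {j. H j (g (j + d)) \<noteq> 0}"
proof (rule finite_subset)
  show "{j. H j (g (j + d)) \<noteq> 0} \<subseteq> (\<lambda>i. i - d) ` {i. g i \<noteq> 0}"
    using assms(2) by (force intro: image_eqI[where x = "_ + d"])
qed (use assms(1) in blast)

lemma finite_support_shift:
  "finite {j. u j \<noteq> 0} \<Longrightarrow> finite {j::int. u (j + d) \<noteq> (0::'a::zero)}"
  using finite_support_comp_shift[where H = "\<lambda>_ x. x"] by simp

lemma Sum_any_telescope_add:
  fixes u g :: "int \<Rightarrow> 'a::ab_group_add"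
  assumes "finite {j. u j \<noteq> 0}" and "finite {j. g j \<noteq> 0}"
  shows "Sum_any (\<lambda>j. u (j + d) - u j + g j) = Sum_any g"
proof -
  have "Sum_any (\<lambda>j. u (j + d) - u j + g j) = Sum_any (\<lambda>j. (u (j + d) + g j) - u j)"
    by (simp add: algebra_simps)
  also have "\<dots> = Sum_any (\<lambda>j. u (j + d) + g j) - Sum_any u"
    using assms by (intro Sum_any_diff finite_support_add finite_support_shift)
  also have "\<dots> = Sum_any g"
    using assms by (simp add: Sum_any.distrib finite_support_shift Sum_any_shift)
  finally show ?thesis .
qed

lemma Sum_any_telescope2_add:
  fixes u w g :: "int \<Rightarrow> 'a::ab_group_add"
  assumes "finite {j. u j \<noteq> 0}" and "finite {j. w j \<noteq> 0}" and "finite {j. g j \<noteq> 0}"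
  shows "Sum_any (\<lambda>j. u (j + a) - u j + (w (j + b) - w j + g j)) = Sum_any g"
proof -
  have "finite {j. w (j + b) - w j + g j \<noteq> 0}"
    using assms(2,3) by (intro finite_support_add finite_support_diff finite_support_shift)
  then have "Sum_any (\<lambda>j. u (j + a) - u j + (w (j + b) - w j + g j))
      = Sum_any (\<lambda>j. w (j + b) - w j + g j)"
    by (rule Sum_any_telescope_add[OF assms(1)])
  also have "\<dots> = Sum_any g"
    by (rule Sum_any_telescope_add[OF assms(2,3)])
  finally show ?thesis .
qed

lemma sum_atLeastAtMost_shift2:
  "(\<Sum>m\<in>{1..K + 2}. f m) = f 1 + f 2 + (\<Sum>m\<in>{1..K}. f (m + 2 :: nat))"
  by (induction K) (simp_all add: numeral_2_eq_2 sum.cl_ivl_Suc add.assoc)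

section \<open>The operators A_m, B_m, C_m, D_m\<close>

abbreviation "xmul k \<equiv> vmul (Xv k)"
abbreviation "ymul k \<equiv> vmul (Yv k)"
abbreviation "dx k \<equiv> pd (Xv k)"
abbreviation "dy k \<equiv> pd (Yv k)"

lemmas vmul_pd_simps = vmul_add vmul_diff vmul_uminus vmul_cpoly pd_add pd_diff pd_uminus pd_cpoly
  linear_op_cpoly_right[OF linear_op_vmul] linear_op_cpoly_right[OF linear_op_pd] pd_vmul

lemma linear_op_Aop: "linear_op (Aop m)"
  by (simp add: linear_op_def Aop_def vmul_pd_simps algebra_simps)
lemma linear_op_Bop: "linear_op (Bop m)"
  by (simp add: linear_op_def Bop_def vmul_pd_simps algebra_simps)
lemma linear_op_Cop: "linear_op (Cop m)"
  by (simp add: linear_op_def Cop_def vmul_pd_simps algebra_simps)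
lemma linear_op_Dop: "linear_op (Dop m)"
  by (simp add: linear_op_def Dop_def vmul_pd_simps algebra_simps)

lemma Aop_commute: "Aop a (Aop b q) = Aop b (Aop a q)"
  by (simp add: Aop_def vmul_pd_simps pd_commute vmul_commute algebra_simps)
lemma Bop_commute: "Bop a (Bop b q) = Bop b (Bop a q)"
  by (simp add: Bop_def vmul_pd_simps pd_commute algebra_simps)
lemma Cop_commute: "Cop a (Cop b q) = Cop b (Cop a q)"
  by (simp add: Cop_def vmul_pd_simps pd_commute vmul_commute algebra_simps)
lemma Dop_commute: "Dop a (Dop b q) = Dop b (Dop a q)"
  by (simp add: Dop_def vmul_pd_simps pd_commute algebra_simps)

lemma Aop_1: "Aop (Suc 0) r = xmul (Suc 0) r - dy (Suc 0) r"
  by (simp add: Aop_def cpoly_one)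

lemma ecoeff_Aop_xmul: "ecoeff Aop i (xmul k q) = xmul k (ecoeff Aop i q)"
  by (rule ecoeff_commute[OF linear_op_Aop linear_op_vmul])
     (simp add: Aop_def vmul_pd_simps vmul_commute[of "Xv k"])
lemma ecoeff_Aop_ymul:
  "1 \<le> k \<Longrightarrow>
    ecoeff Aop i (ymul k q) = ymul k (ecoeff Aop i q) - cpoly (1 / of_nat k) * ecoeff Aop (i - int k) q"
  by (subst ecoeff_commutator[where Z = "ymul k" and \<kappa> = "- (1 / of_nat k)"])
     (simp_all add: linear_op_Aop linear_op_vmul Aop_def vmul_pd_simps vmul_commute[of "Yv k"]
         cpoly_uminus distrib_left)
lemma ecoeff_Aop_dx: "1 \<le> k \<Longrightarrow> ecoeff Aop i (dx k q) = dx k (ecoeff Aop i q)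
    - ecoeff Aop (i - int k) q"
  by (subst ecoeff_commutator[where Z = "dx k" and \<kappa> = "- 1"])
     (simp_all add: linear_op_Aop linear_op_pd Aop_def vmul_pd_simps pd_commute[of "Xv k"]
         cpoly_uminus cpoly_one)
lemma ecoeff_Aop_dy: "ecoeff Aop i (dy k q) = dy k (ecoeff Aop i q)"
  by (rule ecoeff_commute[OF linear_op_Aop linear_op_pd])
     (simp add: Aop_def vmul_pd_simps pd_commute[of "Yv k"])

lemma ecoeff_Bop_xmul:
  "1 \<le> k \<Longrightarrow>
    ecoeff Bop i (xmul k q) = xmul k (ecoeff Bop i q) - cpoly (1 / of_nat k) * ecoeff Bop (i - int k) q"
  by (subst ecoeff_commutator[where Z = "xmul k" and \<kappa> = "- (1 / of_nat k)"])
     (simp_all add: linear_op_Bop linear_op_vmul Bop_def vmul_pd_simps cpoly_uminus distrib_left)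
lemma ecoeff_Bop_ymul: "ecoeff Bop i (ymul k q) = ymul k (ecoeff Bop i q)"
  by (rule ecoeff_commute[OF linear_op_Bop linear_op_vmul]) (simp add: Bop_def vmul_pd_simps)
lemma ecoeff_Bop_dx: "ecoeff Bop i (dx k q) = dx k (ecoeff Bop i q)"
  by (rule ecoeff_commute[OF linear_op_Bop linear_op_pd])
      (simp add: Bop_def vmul_pd_simps pd_commute[of "Xv k"])
lemma ecoeff_Bop_dy: "ecoeff Bop i (dy k q) = dy k (ecoeff Bop i q)"
  by (rule ecoeff_commute[OF linear_op_Bop linear_op_pd])
      (simp add: Bop_def vmul_pd_simps pd_commute[of "Yv k"])

lemma ecoeff_Cop_xmul:
  "1 \<le> k \<Longrightarrow>
    ecoeff Cop i (xmul k q) = xmul k (ecoeff Cop i q) - cpoly (1 / of_nat k) * ecoeff Cop (i - int k) q"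
  by (subst ecoeff_commutator[where Z = "xmul k" and \<kappa> = "- (1 / of_nat k)"])
     (simp_all add: linear_op_Cop linear_op_vmul Cop_def vmul_pd_simps vmul_commute[of "Xv k"]
         cpoly_uminus distrib_left)
lemma ecoeff_Cop_ymul: "ecoeff Cop i (ymul k q) = ymul k (ecoeff Cop i q)"
  by (rule ecoeff_commute[OF linear_op_Cop linear_op_vmul])
     (simp add: Cop_def vmul_pd_simps vmul_commute[of "Yv k"])
lemma ecoeff_Cop_dx: "ecoeff Cop i (dx k q) = dx k (ecoeff Cop i q)"
  by (rule ecoeff_commute[OF linear_op_Cop linear_op_pd])
     (simp add: Cop_def vmul_pd_simps pd_commute[of "Xv k"])
lemma ecoeff_Cop_dy: "1 \<le> k \<Longrightarrow> ecoeff Cop i (dy k q) = dy k (ecoeff Cop i q)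
    - ecoeff Cop (i - int k) q"
  by (subst ecoeff_commutator[where Z = "dy k" and \<kappa> = "- 1"])
     (simp_all add: linear_op_Cop linear_op_pd Cop_def vmul_pd_simps pd_commute[of "Yv k"]
         cpoly_uminus cpoly_one)

lemma ecoeff_Dop_xmul: "ecoeff Dop i (xmul k q) = xmul k (ecoeff Dop i q)"
  by (rule ecoeff_commute[OF linear_op_Dop linear_op_vmul]) (simp add: Dop_def vmul_pd_simps)
lemma ecoeff_Dop_ymul:
  "1 \<le> k \<Longrightarrow>
    ecoeff Dop i (ymul k q) = ymul k (ecoeff Dop i q) - cpoly (1 / of_nat k) * ecoeff Dop (i - int k) q"
  by (subst ecoeff_commutator[where Z = "ymul k" and \<kappa> = "- (1 / of_nat k)"])
     (simp_all add: linear_op_Dop linear_op_vmul Dop_def vmul_pd_simps cpoly_uminus distrib_left)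
lemma ecoeff_Dop_dx: "ecoeff Dop i (dx k q) = dx k (ecoeff Dop i q)"
  by (rule ecoeff_commute[OF linear_op_Dop linear_op_pd])
      (simp add: Dop_def vmul_pd_simps pd_commute[of "Xv k"])
lemma ecoeff_Dop_dy: "ecoeff Dop i (dy k q) = dy k (ecoeff Dop i q)"
  by (rule ecoeff_commute[OF linear_op_Dop linear_op_pd])
      (simp add: Dop_def vmul_pd_simps pd_commute[of "Yv k"])

lemmas ecoeff_AB_rules = ecoeff_Aop_xmul ecoeff_Aop_ymul ecoeff_Aop_dx ecoeff_Aop_dy
  ecoeff_Bop_xmul ecoeff_Bop_ymul ecoeff_Bop_dx ecoeff_Bop_dy
lemmas ecoeff_CD_rules = ecoeff_Cop_xmul ecoeff_Cop_ymul ecoeff_Cop_dx ecoeff_Cop_dy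
  ecoeff_Dop_xmul ecoeff_Dop_ymul ecoeff_Dop_dx ecoeff_Dop_dy

lemma linear_op_ecoeff_ops:
  "linear_op (ecoeff Aop i)" "linear_op (ecoeff Bop i)"
  "linear_op (ecoeff Cop i)" "linear_op (ecoeff Dop i)"
  by (simp_all add: linear_op_ecoeff linear_op_Aop linear_op_Bop linear_op_Cop linear_op_Dop)

lemmas ecoeff_linear_simps =
  linear_op_simps[OF linear_op_ecoeff_ops(1)] linear_op_simps[OF linear_op_ecoeff_ops(2)]
  linear_op_simps[OF linear_op_ecoeff_ops(3)] linear_op_simps[OF linear_op_ecoeff_ops(4)]

lemma ecoeff_Aop_euler:
  "nat i \<le> K \<Longrightarrow> cpoly (of_int i) * ecoeff Aop i q
      = (\<Sum>m\<in>{1..K}. cpoly (of_nat m) * Aop m (ecoeff Aop (i - int m) q))"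
  by (rule ecoeff_euler[OF linear_op_Aop Aop_commute])

lemma ecoeff_Bop_euler:
  "nat i \<le> K \<Longrightarrow> cpoly (of_int i) * ecoeff Bop i q = - (\<Sum>m\<in>{1..K}. dx m (ecoeff Bop (i - int m) q))"
  unfolding ecoeff_euler[OF linear_op_Bop Bop_commute] sum_negf[symmetric]
  by (intro sum.cong refl) (simp add: Bop_def cpoly_mult_mult cpoly_one)

lemma ecoeff_Cop_euler:
  "nat i \<le> K \<Longrightarrow> cpoly (of_int i) * ecoeff Cop i q
      = (\<Sum>m\<in>{1..K}. cpoly (of_nat m) * Cop m (ecoeff Cop (i - int m) q))"
  by (rule ecoeff_euler[OF linear_op_Cop Cop_commute])

lemma ecoeff_Dop_euler:
  "nat i \<le> K \<Longrightarrow> cpoly (of_int i) * ecoeff Dop i q = - (\<Sum>m\<in>{1..K}. dy m (ecoeff Dop (i - int m) q))"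
  unfolding ecoeff_euler[OF linear_op_Dop Dop_commute] sum_negf[symmetric]
  by (intro sum.cong refl) (simp add: Dop_def cpoly_mult_mult cpoly_one)

lemma ecoeff_Aop_euler_shift2:
  assumes "nat i \<le> K"
  shows "(\<Sum>m\<in>{1..K}. cpoly (of_nat (m + 2)) * Aop (m + 2) (ecoeff Aop (i - int m) r))
     = cpoly (of_int i + 2) * ecoeff Aop (i + 2) r - Aop 1 (ecoeff Aop (i + 1) r)
       - cpoly 2 * Aop 2 (ecoeff Aop i r)"
proof -
  have "cpoly (of_int (i + 2)) * ecoeff Aop (i + 2) r
      = (\<Sum>m\<in>{1..K + 2}. cpoly (of_nat m) * Aop m (ecoeff Aop (i + 2 - int m) r))"
    using assms by (intro ecoeff_Aop_euler) simp
  also have "\<dots> = Aop 1 (ecoeff Aop (i + 1) r) + cpoly 2 * Aop 2 (ecoeff Aop i r)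
       + (\<Sum>m\<in>{1..K}. cpoly (of_nat (m + 2)) * Aop (m + 2) (ecoeff Aop (i - int m) r))"
    by (simp only: sum_atLeastAtMost_shift2) (simp add: cpoly_one algebra_simps)
  finally show ?thesis
    by (simp add: algebra_simps)
qed

lemma ecoeff_Dop_euler_shift2:
  assumes "nat j \<le> K"
  shows "(\<Sum>m\<in>{1..K}. dy (m + 2) (ecoeff Dop (j - int m) q))
     = - (cpoly (of_int j + 2) * ecoeff Dop (j + 2) q) - dy 1 (ecoeff Dop (j + 1) q)
         - dy 2 (ecoeff Dop j q)"
proof -
  have "cpoly (of_int j + 2) * ecoeff Dop (j + 2) q =
      - (\<Sum>m\<in>{1..K + 2}. dy m (ecoeff Dop (j + 2 - int m) q))"
    using assms ecoeff_Dop_euler[of "j + 2" "K + 2" q] by simp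
  also have "\<dots> = - (dy 1 (ecoeff Dop (j + 1) q) + dy 2 (ecoeff Dop j q)
       + (\<Sum>m\<in>{1..K}. dy (m + 2) (ecoeff Dop (j - int m) q)))"
    by (simp only: sum_atLeastAtMost_shift2) (simp add: algebra_simps)
  finally have euler: "cpoly (of_int j + 2) * ecoeff Dop (j + 2) q = \<dots>" .
  show ?thesis
    by (simp only: euler) (simp add: algebra_simps)
qed

definition x_index :: "var \<Rightarrow> nat" where
  "x_index v = (case v of Xv k \<Rightarrow> k | Yv _ \<Rightarrow> 0)"
definition y_index :: "var \<Rightarrow> nat" where
  "y_index v = (case v of Xv _ \<Rightarrow> 0 | Yv k \<Rightarrow> k)"

lemma Bop_lowers_weight: "lowers_weight x_index Bop"
  unfolding lowers_weight_def
proof (intro allI impI)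
  fix m p \<beta>
  assume "\<beta> \<in> Poly_Mapping.keys (Bop m p)"
  then have "\<beta> + Poly_Mapping.single (Xv m) 1 \<in> Poly_Mapping.keys p"
    by (auto simp: Bop_def in_keys_iff lookup_cpoly_mult lookup_pd)
  moreover have "weight x_index (\<beta> + Poly_Mapping.single (Xv m) 1) = weight x_index \<beta> + m"
    by (simp only: weight_add_single) (simp add: x_index_def)
  ultimately show "\<exists>\<alpha>\<in>Poly_Mapping.keys p. weight x_index \<alpha> = weight x_index \<beta> + m"
    by blast
qed

lemma Dop_lowers_weight: "lowers_weight y_index Dop"
  unfolding lowers_weight_def
proof (intro allI impI)
  fix m p \<beta>
  assume "\<beta> \<in> Poly_Mapping.keys (Dop m p)"
  then have "\<beta> + Poly_Mapping.single (Yv m) 1 \<in> Poly_Mapping.keys p"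
    by (auto simp: Dop_def in_keys_iff lookup_cpoly_mult lookup_pd)
  moreover have "weight y_index (\<beta> + Poly_Mapping.single (Yv m) 1) = weight y_index \<beta> + m"
    by (simp only: weight_add_single) (simp add: y_index_def)
  ultimately show "\<exists>\<alpha>\<in>Poly_Mapping.keys p. weight y_index \<alpha> = weight y_index \<beta> + m"
    by blast
qed

lemma finite_support_ecoeff_Bop: "finite {i. ecoeff Bop i p \<noteq> 0}"
  by (rule finite_support_ecoeff[OF Bop_lowers_weight])
lemma finite_support_ecoeff_Dop: "finite {i. ecoeff Dop i p \<noteq> 0}"
  by (rule finite_support_ecoeff[OF Dop_lowers_weight])

lemma finite_support_ecoeff_Bop_term:
  assumes "\<And>j. H j 0 = 0"
  shows "finite {j. H j (ecoeff Bop (j - d) p) \<noteq> 0}" and "finite {j. H j (ecoeff Bop j p) \<noteq> 0}"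
  using finite_support_comp_shift[OF finite_support_ecoeff_Bop, where H = H and d = "- d"]
    finite_support_comp_shift[OF finite_support_ecoeff_Bop, where H = H and d = 0] assms
  by simp_all

lemma finite_support_ecoeff_Dop_term:
  assumes "\<And>j. H j 0 = 0"
  shows "finite {j. H j (ecoeff Dop (j - d) p) \<noteq> 0}" and "finite {j. H j (ecoeff Dop j p) \<noteq> 0}"
  using finite_support_comp_shift[OF finite_support_ecoeff_Dop, where H = H and d = "- d"]
    finite_support_comp_shift[OF finite_support_ecoeff_Dop, where H = H and d = 0] assms
  by simp_all

definition Lterm :: "nat \<Rightarrow> op" where
  "Lterm m p = (if 1 \<le> m then cpoly (of_nat (m + 2)) * xmul (m + 2) (dx m p)
                            - cpoly (of_nat m) * ymul m (dy (m + 2) p) else 0)"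

lemma Lplus_eq_Sum_any_Lterm:
  "Lplus c p = cpoly (1/2) * xmul 1 (xmul 1 p) + Sum_any (\<lambda>m. Lterm m p) - xmul 1 (dy 1 p)
      - cpoly c * dy 2 p"
  unfolding Lplus_def Lterm_def fsum_eq_Sum_any ..

lemma pd_eq_0_if_not_occurring:
  assumes "v \<notin> (\<Union>\<alpha>\<in>Poly_Mapping.keys p. Poly_Mapping.keys \<alpha>)"
  shows "pd v p = 0"
proof (rule poly_mapping_eqI)
  fix \<beta> :: "var \<Rightarrow>\<^sub>0 nat"
  have "v \<in> Poly_Mapping.keys (\<beta> + Poly_Mapping.single v 1)"
    by (simp add: in_keys_iff lookup_add)
  then have "\<beta> + Poly_Mapping.single v 1 \<notin> Poly_Mapping.keys p"
    using assms by blast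
  then have "Poly_Mapping.lookup p (\<beta> + Poly_Mapping.single v 1) = 0"
    by (simp only: in_keys_iff not_not)
  then show "Poly_Mapping.lookup (pd v p) \<beta> = Poly_Mapping.lookup 0 \<beta>"
    by (simp only: lookup_pd lookup_zero mult_zero_right)
qed

lemma finite_support_Lterm: "finite {m. Lterm m p \<noteq> 0}"
proof -
  let ?V = "\<Union>\<alpha>\<in>Poly_Mapping.keys p. Poly_Mapping.keys \<alpha>"
  have "m \<in> Xv -` ?V \<union> (\<lambda>m. Yv (m + 2)) -` ?V" if "Lterm m p \<noteq> 0" for m
  proof (rule ccontr)
    assume "m \<notin> Xv -` ?V \<union> (\<lambda>m. Yv (m + 2)) -` ?V"
    then have "dx m p = 0" and "dy (m + 2) p = 0"
      by (simp_all add: pd_eq_0_if_not_occurring)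
    then have "Lterm m p = 0"
      by (simp add: Lterm_def linear_op_zero[OF linear_op_vmul])
    with that show False
      by contradiction
  qed
  then have "{m. Lterm m p \<noteq> 0} \<subseteq> Xv -` ?V \<union> (\<lambda>m. Yv (m + 2)) -` ?V"
    by blast
  moreover have "finite ?V"
    by simp
  then have "finite (Xv -` ?V \<union> (\<lambda>m. Yv (m + 2)) -` ?V)"
    by (auto intro: finite_vimageI simp: inj_def)
  ultimately show ?thesis
    by (rule finite_subset)
qed

lemma linear_op_Lterm: "linear_op (Lterm m)"
  by (simp add: linear_op_def Lterm_def vmul_pd_simps algebra_simps)

lemma linear_op_Lplus: "linear_op (Lplus c)"
proof -
  have "Sum_any (\<lambda>m. Lterm m (p + q)) = Sum_any (\<lambda>m. Lterm m p) + Sum_any (\<lambda>m. Lterm m q)" for p q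
    by (simp add: linear_op_add[OF linear_op_Lterm] Sum_any.distrib finite_support_Lterm)
  moreover have "Sum_any (\<lambda>m. Lterm m (cpoly a * p)) = cpoly a * Sum_any (\<lambda>m. Lterm m p)" for a p
    by (simp add: linear_op_cpoly[OF linear_op_Lterm] Sum_any_right_distrib finite_support_Lterm)
  ultimately show ?thesis
    by (simp add: linear_op_def Lplus_eq_Sum_any_Lterm vmul_pd_simps algebra_simps)
qed

lemma Lplus_commutator:
  assumes lin: "linear_op \<Phi>"
  shows "\<Phi> (Lplus c q) - Lplus c (\<Phi> q) =
      cpoly (1/2) * (\<Phi> (xmul 1 (xmul 1 q)) - xmul 1 (xmul 1 (\<Phi> q)))
    + Sum_any (\<lambda>m. \<Phi> (Lterm m q) - Lterm m (\<Phi> q))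
    - (\<Phi> (xmul 1 (dy 1 q)) - xmul 1 (dy 1 (\<Phi> q)))
    - cpoly c * (\<Phi> (dy 2 q) - dy 2 (\<Phi> q))"
proof -
  have "{m. \<Phi> (Lterm m q) \<noteq> 0} \<subseteq> {m. Lterm m q \<noteq> 0}"
    using linear_op_zero[OF lin] by auto
  then have "finite {m. \<Phi> (Lterm m q) \<noteq> 0}"
    using finite_support_Lterm by (rule finite_subset)
  then have "Sum_any (\<lambda>m. \<Phi> (Lterm m q) - Lterm m (\<Phi> q))
      = \<Phi> (Sum_any (\<lambda>m. Lterm m q)) - Sum_any (\<lambda>m. Lterm m (\<Phi> q))"
    by (simp add: Sum_any_diff finite_support_Lterm linear_op_Sum_any[OF lin])
  then show ?thesis
    by (simp add: Lplus_eq_Sum_any_Lterm linear_op_simps[OF lin] algebra_simps)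
qed

section \<open>Commutators of X_n and Y_n\<close>

lemma Xop_eq_Sum_any: "Xop n p = Sum_any (\<lambda>j. ecoeff Aop (n + j) (ecoeff Bop j p))"
proof -
  have "Xop n p = Sum_any (\<lambda>j. ecoeff Aop (n + int j) (ecoeff Bop (int j) p))"
    by (simp add: Xop_def fsum_eq_Sum_any ecoeff_def)
  also have "\<dots> = Sum_any (\<lambda>j. ecoeff Aop (n + j) (ecoeff Bop j p))"
    by (rule Sum_any_int_eq_Sum_any_nat)
       (simp_all add: finite_support_ecoeff_Bop_term(2)[where H = "\<lambda>j. ecoeff Aop (n + j)"]
          ecoeff_neg ecoeff_linear_simps)
  finally show ?thesis .
qed

lemma Yop_eq_Sum_any: "Yop n p = Sum_any (\<lambda>j. ecoeff Cop (n + j) (ecoeff Dop j p))"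
proof -
  have "Yop n p = Sum_any (\<lambda>j. ecoeff Cop (n + int j) (ecoeff Dop (int j) p))"
    by (simp add: Yop_def fsum_eq_Sum_any ecoeff_def)
  also have "\<dots> = Sum_any (\<lambda>j. ecoeff Cop (n + j) (ecoeff Dop j p))"
    by (rule Sum_any_int_eq_Sum_any_nat)
       (simp_all add: finite_support_ecoeff_Dop_term(2)[where H = "\<lambda>j. ecoeff Cop (n + j)"]
          ecoeff_neg ecoeff_linear_simps)
  finally show ?thesis .
qed

lemma Xop_commutator:
  assumes "linear_op \<Phi>"
  shows "Xop n (\<Phi> p) - \<Phi> (Xop n p)
    = Sum_any (\<lambda>j. ecoeff Aop (n + j) (ecoeff Bop j (\<Phi> p))
        - \<Phi> (ecoeff Aop (n + j) (ecoeff Bop j p)))"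
  using linear_op_zero[OF assms]
  by (simp add: Xop_eq_Sum_any linear_op_Sum_any[OF assms] Sum_any_diff ecoeff_linear_simps
      finite_support_ecoeff_Bop_term(2)[where H = "\<lambda>j. ecoeff Aop (n + j)"]
      finite_support_ecoeff_Bop_term(2)[where H = "\<lambda>j r. \<Phi> (ecoeff Aop (n + j) r)"])

lemma Yop_commutator:
  assumes "linear_op \<Phi>"
  shows "Yop n (\<Phi> p) - \<Phi> (Yop n p)
    = Sum_any (\<lambda>j. ecoeff Cop (n + j) (ecoeff Dop j (\<Phi> p))
        - \<Phi> (ecoeff Cop (n + j) (ecoeff Dop j p)))"
  using linear_op_zero[OF assms]
  by (simp add: Yop_eq_Sum_any linear_op_Sum_any[OF assms] Sum_any_diff ecoeff_linear_simps
      finite_support_ecoeff_Dop_term(2)[where H = "\<lambda>j. ecoeff Cop (n + j)"]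
      finite_support_ecoeff_Dop_term(2)[where H = "\<lambda>j r. \<Phi> (ecoeff Cop (n + j) r)"])

lemma Xop_xmul2_commutator: "Xop n (xmul 2 p) - xmul 2 (Xop n p) = - (cpoly (1/2) * Xop (n + 2) p)"
proof -
  have "Xop n (xmul 2 p) - xmul 2 (Xop n p)
      = Sum_any (\<lambda>j. - (cpoly (1/2) * ecoeff Aop (n + j) (ecoeff Bop (j - 2) p)))"
    by (simp add: Xop_commutator[OF linear_op_vmul] ecoeff_AB_rules ecoeff_linear_simps)
  also have "\<dots> = - (cpoly (1/2) * Sum_any (\<lambda>j. ecoeff Aop (n + j) (ecoeff Bop (j - 2) p)))"
    using finite_support_ecoeff_Bop_term(1)[where H = "\<lambda>j. ecoeff Aop (n + j)" and d = 2]
    by (simp add: Sum_any_uminus Sum_any_right_distrib ecoeff_linear_simps)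
  also have "Sum_any (\<lambda>j. ecoeff Aop (n + j) (ecoeff Bop (j - 2) p)) = Xop (n + 2) p"
    using Sum_any_shift[of "\<lambda>j. ecoeff Aop (n + j) (ecoeff Bop (j - 2) p)" 2]
    by (simp add: Xop_eq_Sum_any add_ac)
  finally show ?thesis .
qed

lemma Yop_xmul2_commutator: "Yop n (xmul 2 p) - xmul 2 (Yop n p) = - (cpoly (1/2) * Yop (n - 2) p)"
proof -
  have "Yop n (xmul 2 p) - xmul 2 (Yop n p)
      = Sum_any (\<lambda>j. - (cpoly (1/2) * ecoeff Cop (n - 2 + j) (ecoeff Dop j p)))"
    by (simp add: Yop_commutator[OF linear_op_vmul] ecoeff_CD_rules ecoeff_linear_simps
        algebra_simps)
  also have "\<dots> = - (cpoly (1/2) * Yop (n - 2) p)"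
    using finite_support_ecoeff_Dop_term(2)[where H = "\<lambda>j. ecoeff Cop (n - 2 + j)"]
    by (simp add: Yop_eq_Sum_any Sum_any_uminus Sum_any_right_distrib ecoeff_linear_simps)
  finally show ?thesis .
qed

lemma ecoeff_AB_Lterm_commutator:
  assumes "1 \<le> m"
  shows "ecoeff Aop i (ecoeff Bop j (Lterm m q)) - Lterm m (ecoeff Aop i (ecoeff Bop j q))
   = - (cpoly (of_nat (m + 2)) * Aop (m + 2) (ecoeff Aop (i - int m) (ecoeff Bop j q)))
     - ecoeff Aop i (dx m (ecoeff Bop (j - 2 - int m) q))"
proof -
  from assms have "(of_nat m :: complex) \<noteq> 0"
    by simp
  moreover have "(of_nat m + 2 :: complex) \<noteq> 0"
    by (metis of_nat_add of_nat_eq_0_iff of_nat_numeral add_is_0 zero_neq_numeral)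
  ultimately show ?thesis
    using assms
    by (simp add: Lterm_def Aop_def ecoeff_AB_rules ecoeff_linear_simps vmul_pd_simps
        cpoly_mult_mult distrib_left right_diff_distrib)
       (simp add: cpoly_hom algebra_simps)
qed

lemma ecoeff_AB_Lterm_sum_commutator:
  "Sum_any (\<lambda>m. ecoeff Aop i (ecoeff Bop j (Lterm m q)) - Lterm m (ecoeff Aop i (ecoeff Bop j q)))
   = cpoly (of_int j - 2) * ecoeff Aop i (ecoeff Bop (j - 2) q)
     - cpoly (of_int i + 2) * ecoeff Aop (i + 2) (ecoeff Bop j q)
     + Aop 1 (ecoeff Aop (i + 1) (ecoeff Bop j q))
     + cpoly 2 * Aop 2 (ecoeff Aop i (ecoeff Bop j q))"
proof -
  define K where "K = nat i + nat j"
  let ?C = "\<lambda>m. ecoeff Aop i (ecoeff Bop j (Lterm m q)) - Lterm m (ecoeff Aop i (ecoeff Bop j q))"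
  have vanish: "?C m = 0" if "m \<notin> {1..K}" for m
  proof (cases "m = 0")
    case True
    then show ?thesis by (simp add: Lterm_def ecoeff_linear_simps)
  next
    case False
    with that have "i - int m < 0" and "j - 2 - int m < 0"
      by (auto simp: K_def)
    with False show ?thesis
      by (simp add: ecoeff_AB_Lterm_commutator ecoeff_neg linear_op_zero[OF linear_op_Aop]
          ecoeff_linear_simps linear_op_zero[OF linear_op_pd])
  qed
  have "Sum_any ?C = (\<Sum>m\<in>{1..K}. ?C m)"
  proof (rule Sum_any.expand_superset)
    show "{m. ?C m \<noteq> 0} \<subseteq> {1..K}"
      using vanish by blast
  qed simp
  also have "\<dots> =
      - (\<Sum>m\<in>{1..K}. cpoly (of_nat (m + 2)) * Aop (m + 2) (ecoeff Aop (i - int m) (ecoeff Bop j q)))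
      - ecoeff Aop i (\<Sum>m\<in>{1..K}. dx m (ecoeff Bop (j - 2 - int m) q))"
    by (simp add: ecoeff_AB_Lterm_commutator sum_subtractf sum_negf
        linear_op_sum[OF linear_op_ecoeff_ops(1)])
  also have "(\<Sum>m\<in>{1..K}. dx m (ecoeff Bop (j - 2 - int m) q)) =
      - (cpoly (of_int (j - 2)) * ecoeff Bop (j - 2) q)"
    using ecoeff_Bop_euler[of "j - 2" K q] by (simp add: K_def)
  also have "(\<Sum>m\<in>{1..K}. cpoly (of_nat (m + 2))
      * Aop (m + 2) (ecoeff Aop (i - int m) (ecoeff Bop j q)))
      = cpoly (of_int i + 2) * ecoeff Aop (i + 2) (ecoeff Bop j q)
        - Aop 1 (ecoeff Aop (i + 1) (ecoeff Bop j q))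
        - cpoly 2 * Aop 2 (ecoeff Aop i (ecoeff Bop j q))"
    by (rule ecoeff_Aop_euler_shift2) (simp add: K_def)
  finally show ?thesis
    by (simp add: ecoeff_linear_simps algebra_simps)
qed

lemma ecoeff_AB_Lplus_commutator:
  "ecoeff Aop i (ecoeff Bop j (Lplus c q)) - Lplus c (ecoeff Aop i (ecoeff Bop j q))
   = - Aop 1 (ecoeff Aop i (ecoeff Bop (j - 1) q))
     + cpoly (of_int j - 3/2) * ecoeff Aop i (ecoeff Bop (j - 2) q)
     - cpoly (of_int i + 2) * ecoeff Aop (i + 2) (ecoeff Bop j q)
     + Aop 1 (ecoeff Aop (i + 1) (ecoeff Bop j q))
     + cpoly 2 * Aop 2 (ecoeff Aop i (ecoeff Bop j q))"
proof -
  let ?P = "\<lambda>j r. ecoeff Aop i (ecoeff Bop j r)"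
  have x1x1: "?P j (xmul 1 (xmul 1 q)) - xmul 1 (xmul 1 (?P j q))
      = cpoly (- 2) * xmul 1 (?P (j - 1) q) + ?P (j - 2) q"
    by (simp add: ecoeff_AB_rules ecoeff_linear_simps vmul_pd_simps)
        (simp add: cpoly_hom algebra_simps)
  have x1y1: "?P j (xmul 1 (dy 1 q)) - xmul 1 (dy 1 (?P j q)) = - dy 1 (?P (j - 1) q)"
    by (simp add: ecoeff_AB_rules ecoeff_linear_simps vmul_pd_simps)
        (simp add: cpoly_hom algebra_simps)
  have y2: "?P j (dy 2 q) - dy 2 (?P j q) = 0"
    by (simp add: ecoeff_AB_rules)
  have "?P j (Lplus c q) - Lplus c (?P j q)
     = cpoly (1/2) * (cpoly (- 2) * xmul 1 (?P (j - 1) q) + ?P (j - 2) q)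
       + (cpoly (of_int j - 2) * ?P (j - 2) q
          - cpoly (of_int i + 2) * ecoeff Aop (i + 2) (ecoeff Bop j q)
          + Aop 1 (ecoeff Aop (i + 1) (ecoeff Bop j q)) + cpoly 2 * Aop 2 (?P j q))
       - (- dy 1 (?P (j - 1) q)) - cpoly c * 0"
    unfolding Lplus_commutator[OF linear_op_comp[OF linear_op_ecoeff_ops(1,2)]] x1x1 x1y1 y2
      ecoeff_AB_Lterm_sum_commutator ..
  also have "cpoly (1/2) * (cpoly (- 2) * xmul 1 (?P (j - 1) q) + ?P (j - 2) q)
      = - xmul 1 (?P (j - 1) q) + cpoly (1/2) * ?P (j - 2) q"
    by (simp only: distrib_left cpoly_mult_mult) (simp add: cpoly_uminus cpoly_one)
  also have "cpoly (of_int j - 2) = cpoly (of_int j - 3/2) - cpoly (1/2)"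
    by (simp flip: cpoly_diff)
  finally show ?thesis
    by (simp add: Aop_1 algebra_simps)
qed

lemma Xop_Lplus_commutator:
  "Xop n (Lplus c p) - Lplus c (Xop n p)
     = - (cpoly (of_int n + 3/2) * Xop (n + 2) p) + (cpoly 2 * xmul 2 (Xop n p) - dy 2 (Xop n p))"
proof -
  let ?P = "\<lambda>i j. ecoeff Aop i (ecoeff Bop j p)"
  define u where "u j = Aop 1 (?P (n + j) (j - 1))" for j
  define w where "w j = cpoly (3/2 - of_int j) * ?P (n + j) (j - 2)" for j
  define g
    where "g j = cpoly 2 * Aop 2 (?P (n + j) j) - cpoly (of_int n + 3/2) * ?P (n + 2 + j) j" for j
  have "ecoeff Aop (n + j) (ecoeff Bop j (Lplus c p)) - Lplus c (?P (n + j) j)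
      = u (j + 1) - u j + (w (j + 2) - w j + g j)" for j
  proof -
    have c1: "cpoly (of_int j - 3/2) = - cpoly (3/2 - of_int j)"
      by (simp flip: cpoly_uminus)
    have c2: "cpoly (of_int (n + j) + 2) = cpoly (of_int n + 3/2) - cpoly (3/2 - of_int (j + 2))"
      by (simp add: add_ac flip: cpoly_diff)
    show ?thesis
      unfolding ecoeff_AB_Lplus_commutator c1 c2 u_def w_def g_def by (simp add: algebra_simps)
  qed
  then have "Xop n (Lplus c p) - Lplus c (Xop n p)
      = Sum_any (\<lambda>j. u (j + 1) - u j + (w (j + 2) - w j + g j))"
    by (simp add: Xop_commutator[OF linear_op_Lplus])
  also have "\<dots> = Sum_any g"
  proof -
    have fin_u: "finite {j. u j \<noteq> 0}"
      unfolding u_def by (rule finite_support_ecoeff_Bop_term(1))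
          (simp add: ecoeff_linear_simps linear_op_zero[OF linear_op_Aop])
    have fin_w: "finite {j. w j \<noteq> 0}"
      unfolding w_def by (rule finite_support_ecoeff_Bop_term(1)) (simp add: ecoeff_linear_simps)
    have fin_g: "finite {j. g j \<noteq> 0}"
      unfolding g_def by (rule finite_support_ecoeff_Bop_term(2))
          (simp add: ecoeff_linear_simps linear_op_zero[OF linear_op_Aop])
    show ?thesis
      by (rule Sum_any_telescope2_add[OF fin_u fin_w fin_g])
  qed
  also have "\<dots> = cpoly 2 * Aop 2 (Xop n p) - cpoly (of_int n + 3/2) * Xop (n + 2) p"
  proof -
    have fin: "finite {j. H j (?P (k + j) j) \<noteq> 0}" if "\<And>j. H j 0 = 0" for k H
      by (rule finite_support_ecoeff_Bop_term(2)) (simp add: that ecoeff_linear_simps)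
    show ?thesis
      unfolding g_def Xop_eq_Sum_any
      using fin[of "\<lambda>j r. cpoly 2 * Aop 2 r" n] fin[of "\<lambda>j r. cpoly (of_int n + 3/2) * r" "n + 2"]
        fin[of "\<lambda>j. Aop 2" n] fin[of "\<lambda>j r. r" n] fin[of "\<lambda>j r. r" "n + 2"]
      by (simp add: Sum_any_diff Sum_any_right_distrib linear_op_Sum_any[OF linear_op_Aop]
          linear_op_zero[OF linear_op_Aop])
  qed
  also have "cpoly 2 * Aop 2 r = cpoly 2 * xmul 2 r - dy 2 r" for r
    by (simp add: Aop_def right_diff_distrib cpoly_mult_mult cpoly_one)
  finally show ?thesis
    by (simp add: algebra_simps)
qed

lemma ecoeff_CD_Lterm_commutator:
  assumes "1 \<le> m"
  shows "ecoeff Cop i (ecoeff Dop j (Lterm m q)) - Lterm m (ecoeff Cop i (ecoeff Dop j q))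
   = cpoly (of_nat m) * Cop m (ecoeff Cop (i - 2 - int m) (ecoeff Dop j q))
     + ecoeff Cop i (dy (m + 2) (ecoeff Dop (j - int m) q))"
proof -
  from assms have "(of_nat m :: complex) \<noteq> 0"
    by simp
  moreover have "(of_nat m + 2 :: complex) \<noteq> 0"
    by (metis of_nat_add of_nat_eq_0_iff of_nat_numeral add_is_0 zero_neq_numeral)
  ultimately show ?thesis
    using assms
    by (simp add: Lterm_def Cop_def ecoeff_CD_rules ecoeff_linear_simps vmul_pd_simps
        cpoly_mult_mult distrib_left right_diff_distrib)
       (simp add: cpoly_hom algebra_simps)
qed

lemma ecoeff_CD_Lterm_sum_commutator:
  "Sum_any (\<lambda>m. ecoeff Cop i (ecoeff Dop j (Lterm m q)) - Lterm m (ecoeff Cop i (ecoeff Dop j q)))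
   = cpoly (of_int i - 2) * ecoeff Cop (i - 2) (ecoeff Dop j q)
     - ecoeff Cop i (cpoly (of_int j + 2) * ecoeff Dop (j + 2) q
                     + dy 1 (ecoeff Dop (j + 1) q) + dy 2 (ecoeff Dop j q))"
proof -
  define K where "K = nat i + nat j"
  let ?C = "\<lambda>m. ecoeff Cop i (ecoeff Dop j (Lterm m q)) - Lterm m (ecoeff Cop i (ecoeff Dop j q))"
  have vanish: "?C m = 0" if "m \<notin> {1..K}" for m
  proof (cases "m = 0")
    case True
    then show ?thesis by (simp add: Lterm_def ecoeff_linear_simps)
  next
    case False
    with that have "i - 2 - int m < 0" and "j - int m < 0"
      by (auto simp: K_def)
    with False show ?thesis
      by (simp add: ecoeff_CD_Lterm_commutator ecoeff_neg linear_op_zero[OF linear_op_Cop]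
          ecoeff_linear_simps linear_op_zero[OF linear_op_pd])
  qed
  have "Sum_any ?C = (\<Sum>m\<in>{1..K}. ?C m)"
  proof (rule Sum_any.expand_superset)
    show "{m. ?C m \<noteq> 0} \<subseteq> {1..K}"
      using vanish by blast
  qed simp
  also have "\<dots> = (\<Sum>m\<in>{1..K}. cpoly (of_nat m) * Cop m (ecoeff Cop (i - 2 - int m) (ecoeff Dop j q)))
      + ecoeff Cop i (\<Sum>m\<in>{1..K}. dy (m + 2) (ecoeff Dop (j - int m) q))"
    by (simp add: ecoeff_CD_Lterm_commutator sum.distrib linear_op_sum[OF linear_op_ecoeff_ops(3)])
  also have "(\<Sum>m\<in>{1..K}. cpoly (of_nat m) * Cop m (ecoeff Cop (i - 2 - int m) (ecoeff Dop j q)))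
      = cpoly (of_int (i - 2)) * ecoeff Cop (i - 2) (ecoeff Dop j q)"
    by (rule ecoeff_Cop_euler[symmetric]) (simp add: K_def)
  also have "(\<Sum>m\<in>{1..K}. dy (m + 2) (ecoeff Dop (j - int m) q))
      = - (cpoly (of_int j + 2) * ecoeff Dop (j + 2) q) - dy 1 (ecoeff Dop (j + 1) q)
          - dy 2 (ecoeff Dop j q)"
    by (rule ecoeff_Dop_euler_shift2) (simp add: K_def)
  finally show ?thesis
    by (simp add: ecoeff_linear_simps algebra_simps)
qed

lemma ecoeff_CD_Lplus_commutator:
  "ecoeff Cop i (ecoeff Dop j (Lplus c q)) - Lplus c (ecoeff Cop i (ecoeff Dop j q))
   = cpoly (of_int i - 5/2 + c) * ecoeff Cop (i - 2) (ecoeff Dop j q)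
     + dy 1 (ecoeff Cop (i - 1) (ecoeff Dop j q))
     - ecoeff Cop i (cpoly (of_int j + 2) * ecoeff Dop (j + 2) q
                     + dy 1 (ecoeff Dop (j + 1) q) + dy 2 (ecoeff Dop j q))"
proof -
  let ?P = "\<lambda>i r. ecoeff Cop i (ecoeff Dop j r)"
  have x1x1: "?P i (xmul 1 (xmul 1 q)) - xmul 1 (xmul 1 (?P i q))
      = cpoly (- 2) * xmul 1 (?P (i - 1) q) + ?P (i - 2) q"
    by (simp add: ecoeff_CD_rules ecoeff_linear_simps vmul_pd_simps)
        (simp add: cpoly_hom algebra_simps)
  have x1y1: "?P i (xmul 1 (dy 1 q)) - xmul 1 (dy 1 (?P i q))
      = - xmul 1 (?P (i - 1) q) - dy 1 (?P (i - 1) q) + ?P (i - 2) q"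
    by (simp add: ecoeff_CD_rules ecoeff_linear_simps vmul_pd_simps)
        (simp add: cpoly_hom algebra_simps)
  have y2: "?P i (dy 2 q) - dy 2 (?P i q) = - ?P (i - 2) q"
    by (simp add: ecoeff_CD_rules ecoeff_linear_simps)
  have "?P i (Lplus c q) - Lplus c (?P i q)
     = cpoly (1/2) * (cpoly (- 2) * xmul 1 (?P (i - 1) q) + ?P (i - 2) q)
       + (cpoly (of_int i - 2) * ?P (i - 2) q
          - ecoeff Cop i (cpoly (of_int j + 2) * ecoeff Dop (j + 2) q + dy 1 (ecoeff Dop (j + 1) q)
                          + dy 2 (ecoeff Dop j q)))
       - (- xmul 1 (?P (i - 1) q) - dy 1 (?P (i - 1) q) + ?P (i - 2) q)
       - cpoly c * (- ?P (i - 2) q)"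
    unfolding Lplus_commutator[OF linear_op_comp[OF linear_op_ecoeff_ops(3,4)]] x1x1 x1y1 y2
      ecoeff_CD_Lterm_sum_commutator ..
  also have "cpoly (1/2) * (cpoly (- 2) * xmul 1 (?P (i - 1) q) + ?P (i - 2) q)
      = - xmul 1 (?P (i - 1) q) + cpoly (1/2) * ?P (i - 2) q"
    by (simp only: distrib_left cpoly_mult_mult) (simp add: cpoly_uminus cpoly_one)
  also have "cpoly (of_int i - 2) = cpoly (of_int i - 5/2 + c) - cpoly (1/2) - cpoly c + 1"
    unfolding cpoly_one[symmetric] cpoly_add[symmetric] cpoly_diff[symmetric]
    by (rule arg_cong[where f = cpoly]) simp
  finally show ?thesis
    by (simp add: algebra_simps)
qed

lemma Yop_Lplus_commutator:
  "Yop n (Lplus c p) - Lplus c (Yop n p)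
     = cpoly (of_int n - 3/2 + c) * Yop (n - 2) p - Yop n (dy 2 p)"
proof -
  let ?P = "\<lambda>i j r. ecoeff Cop i (ecoeff Dop j r)"
  define h where "h j = - ecoeff Cop (n + j - 1) (dy 1 (ecoeff Dop j p))" for j
  define k where "k j = - (cpoly (of_int j) * ?P (n + j - 2) j p)" for j
  define g
    where "g j = cpoly (of_int n - 3/2 + c) * ?P (n - 2 + j) j p - ?P (n + j) j (dy 2 p)" for j
  have "?P (n + j) j (Lplus c p) - Lplus c (?P (n + j) j p)
      = h (j + 1) - h j + (k (j + 2) - k j + g j)" for j
  proof -
    have c: "cpoly (of_int (n + j) - 5/2 + c) = cpoly (of_int n - 3/2 + c) + cpoly (of_int j) - 1"
      unfolding cpoly_one[symmetric] cpoly_add[symmetric] cpoly_diff[symmetric]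
      by (rule arg_cong[where f = cpoly]) simp
    show ?thesis
      unfolding ecoeff_CD_Lplus_commutator c h_def k_def g_def
      by (simp add: ecoeff_CD_rules ecoeff_linear_simps cpoly_one algebra_simps)
  qed
  then have "Yop n (Lplus c p) - Lplus c (Yop n p)
      = Sum_any (\<lambda>j. h (j + 1) - h j + (k (j + 2) - k j + g j))"
    by (simp add: Yop_commutator[OF linear_op_Lplus])
  also have "\<dots> = Sum_any g"
  proof -
    have fin: "finite {j. H j (ecoeff Dop j r) \<noteq> 0}" if "\<And>j. H j 0 = 0" for H r
      by (rule finite_support_ecoeff_Dop_term(2)) (rule that)
    have fin_h: "finite {j. h j \<noteq> 0}"
      unfolding h_def by (rule fin) (simp add: ecoeff_linear_simps linear_op_zero[OF linear_op_pd])
    have fin_k: "finite {j. k j \<noteq> 0}"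
      unfolding k_def by (rule fin) (simp add: ecoeff_linear_simps)
    have fin_g: "finite {j. g j \<noteq> 0}"
      unfolding g_def by (intro finite_support_diff fin) (simp_all add: ecoeff_linear_simps)
    show ?thesis
      by (rule Sum_any_telescope2_add[OF fin_h fin_k fin_g])
  qed
  also have "\<dots> = cpoly (of_int n - 3/2 + c) * Yop (n - 2) p - Yop n (dy 2 p)"
  proof -
    have fin: "finite {j. H j (?P (l + j) j r) \<noteq> 0}" if "\<And>j. H j 0 = 0" for l r H
      by (rule finite_support_ecoeff_Dop_term(2)) (simp add: that ecoeff_linear_simps)
    show ?thesis
      unfolding g_def Yop_eq_Sum_any
      using fin[of "\<lambda>j r. cpoly (of_int n - 3/2 + c) * r" "n - 2" p] fin[of "\<lambda>j r. r" "n - 2" p]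
        fin[of "\<lambda>j r. r" n "dy 2 p"]
      by (simp add: Sum_any_diff Sum_any_right_distrib)
  qed
  finally show ?thesis .
qed

theorem lemma4p4:
  fixes kappa :: complex and N :: nat and theta :: "nat \<Rightarrow> complex" and n :: int
  defines "c \<equiv> - kappa + (\<Sum>i=1..N. theta i)"
  shows "\<forall>p. in_R p \<longrightarrow>
     Xop n (Lplus c p) - Lplus c (Xop n p)
       = - (cpoly (of_int n + 3/2) * Xop (n + 2) p)
         + (cpoly 2 * vmul (Xv 2) (Xop n p) - pd (Yv 2) (Xop n p))
   \<and> Yop n (Lplus c p) - Lplus c (Yop n p)
       = cpoly (of_int n - 3/2 - kappa + (\<Sum>i=1..N. theta i)) * Yop (n - 2) p
         - Yop n (pd (Yv 2) p)
   \<and> Xop n (vmul (Xv 2) p) - vmul (Xv 2) (Xop n p) = - (cpoly (1/2) * Xop (n + 2) p)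
   \<and> Yop n (vmul (Xv 2) p) - vmul (Xv 2) (Yop n p) = - (cpoly (1/2) * Yop (n - 2) p)"
proof (intro allI impI conjI)
  fix p
  (* The identities hold on all polynomials. *)
  have "of_int n - 3/2 - kappa + (\<Sum>i=1..N. theta i) = of_int n - 3/2 + c"
    by (simp add: c_def)
  then show "Yop n (Lplus c p) - Lplus c (Yop n p)
      = cpoly (of_int n - 3/2 - kappa + (\<Sum>i=1..N. theta i)) * Yop (n - 2) p - Yop n (pd (Yv 2) p)"
    by (simp only: Yop_Lplus_commutator)
qed (simp_all only: Xop_Lplus_commutator Xop_xmul2_commutator Yop_xmul2_commutator)

end
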